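(* Let $H=(V,E)$ be a hypergraph whose vertex set $V$ is a partition of $[n]$ into sets of cardinality at least $2$, and suppose $H$ is downward-closed (for every $e\in E$ and every $e'\subseteq e$ with $|e'|>1$, $e'\in E$). Let $D=\{\bar i_I\}_{I\in V}$ with $\bar i_I\in I$ for each $I\in V$. Then \[\operatorname{aff}\mathrm{MC}^H=\Big\{w\in\mathbb{R}^{\mathcal{J}^H}\ \Big|\ w_J=\mathscr{L}\prod_{\bar i_I\in J\cap D}\Big(1-\sum_{i\in I\setminus\{\bar i_I\}}w_i\Big)\prod_{i\in J\setminus D}w_i\ \ \forall J\in\mathcal{J}^H\setminus\mathcal{J}^H_\le(D)\Big\}.\]
   Context: Let $n$ be a positive integer, $[n]=\{1,\dots,n\}$. A hypergraph $H=(V,E)$ here has as vertex set $V$ a family of pairwise disjoint subsets of $[n]$, each of cardinality at least $2$, and hyperedge set $E$ consisting of subsets $e\subseteq V$ with $|e|\ge 2$. Write $L(V)=\{\{I\}: I\in V\}$. For a nonempty $e\subseteq V$, $\mathcal{J}^e$ denotes the family of sets $J\subseteq \bigcup_{I\in e} I$ with $|J\cap I|=1$ for every $I\in e$. Let $\mathcal{J}^H=\bigcup_{e\in L(V)\cup E}\mathcal{J}^e$. For a vector $w$ indexed by sets, write $w_i=w_{\{i\}}$. Let $\mathscr{S}^H=\{w\in\{0,1\}^{\mathcal{J}^H}: \sum_{i\in I}w_i=1\ \forall I\in V;\ w_J=\prod_{i\in J}w_i\ \forall J\in\mathcal{J}^H, |J|>1\}$, $\mathrm{MC}^H=\operatorname{conv}\mathscr{S}^H$,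 and $\operatorname{aff}$ denotes affine hull. $\mathcal{J}^H_\le(D)=\{J\in\mathcal{J}^H: J\subseteq[n]\setminus D\}$. The linearization operator $\mathscr{L}$ expands the polynomial and replaces each monomial $\prod_{i\in J'}w_i$ ($J'\ne\varnothing$) by the coordinate $w_{J'}$, the empty monomial being the constant $1$; under the hypotheses every such $J'$ lies in $\mathcal{J}^H_\le(D)$, so the right-hand side is an affine function of $w$. *)

theory Defs
  imports "HOL-Analysis.Analysis" "HOL-Library.Poly_Mapping"
begin

text \<open>Vectors in R^(J^H) are represented as functions from index sets (nat set) to real,
  required to vanish outside J^H.  Affine and convex hulls in this function space,
  written out as the library definitions of affine and convex unfold to.\<close>

definition affine_fun :: "('a \<Rightarrow> real) set \<Rightarrow> bool" where
  "affine_fun S \<longleftrightarrow> (\<forall>x\<in>S. \<forall>y\<in>S. \<forall>u v. u + v = 1 \<longrightarrow> (\<lambda>J. u * x J + v * y J) \<in> S)"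

definition convex_fun :: "('a \<Rightarrow> real) set \<Rightarrow> bool" where
  "convex_fun S \<longleftrightarrow> (\<forall>x\<in>S. \<forall>y\<in>S. \<forall>u v. 0 \<le> u \<longrightarrow> 0 \<le> v \<longrightarrow> u + v = 1 \<longrightarrow>
      (\<lambda>J. u * x J + v * y J) \<in> S)"

definition Jsets :: "nat set set \<Rightarrow> nat set set" where
  "Jsets e = {J. J \<subseteq> \<Union>e \<and> (\<forall>I\<in>e. card (J \<inter> I) = 1)}"

definition LV :: "nat set set \<Rightarrow> nat set set set" where
  "LV V = {{I} | I. I \<in> V}"

definition JH :: "nat set set \<Rightarrow> nat set set set \<Rightarrow> nat set set" where
  "JH V E = (\<Union>e\<in>LV V \<union> E. Jsets e)"

definition JH_le :: "nat \<Rightarrow> nat set set \<Rightarrow> nat set set set \<Rightarrow> nat set \<Rightarrow> nat set set" where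
  "JH_le n V E D = {J \<in> JH V E. J \<subseteq> {1..n} - D}"

definition SH :: "nat set set \<Rightarrow> nat set set set \<Rightarrow> (nat set \<Rightarrow> real) set" where
  "SH V E = {w. (\<forall>J. J \<notin> JH V E \<longrightarrow> w J = 0) \<and>
      (\<forall>J\<in>JH V E. w J \<in> {0, 1}) \<and>
      (\<forall>I\<in>V. (\<Sum>i\<in>I. w {i}) = 1) \<and>
      (\<forall>J\<in>JH V E. card J > 1 \<longrightarrow> w J = (\<Prod>i\<in>J. w {i}))}"

definition MC :: "nat set set \<Rightarrow> nat set set set \<Rightarrow> (nat set \<Rightarrow> real) set" where
  "MC V E = convex_fun hull SH V E"

type_synonym rpoly = "(nat \<Rightarrow>\<^sub>0 nat) \<Rightarrow>\<^sub>0 real"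

definition Var :: "nat \<Rightarrow> rpoly" where
  "Var i = Poly_Mapping.single (Poly_Mapping.single i 1) 1"

definition linearize :: "(nat set \<Rightarrow> real) \<Rightarrow> rpoly \<Rightarrow> real" where
  "linearize w p = (\<Sum>m\<in>Poly_Mapping.keys p. Poly_Mapping.lookup p m * (if m = 0 then 1 else w (Poly_Mapping.keys m)))"

definition downward_closed :: "nat set set set \<Rightarrow> bool" where
  "downward_closed E \<longleftrightarrow> (\<forall>e\<in>E. \<forall>e'. e' \<subseteq> e \<and> card e' > 1 \<longrightarrow> e' \<in> E)"

end

theory Submission
  imports Defs
begin

text \<open>Eliminate in every block I the coordinate of its distinguished element c I, using
  w(c I) = 1 - (sum of w(i) over i in I - {c I}).  On a 0/1 point of S^H this substitution is exact,
  so the substituted monomial of J evaluates to w(J); the equations are affine in w, hence they hold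
  on aff MC^H.  Expanding the substituted monomial, its linearization only involves the free
  coordinates w(K) with K in J^H_<=(D) (that these K are index sets of H is where downward
  closedness enters), so a solution of the equations is determined by its free coordinates.
  Conversely, the 0/1 point that selects K in the blocks met by K and c I in all other blocks has
  free coordinates [K' \<subseteq> K]; this matrix is unitriangular, so affine combinations of these
  points realise arbitrary free coordinates.\<close>

lemma prod_of_bool:
  "finite A \<Longrightarrow> (\<Prod>a\<in>A. of_bool (P a)) = (of_bool (\<forall>a\<in>A. P a) :: 'b::comm_semiring_1)"
  by (induction A rule: finite_induct) auto

lemma affine_fun_hull: "affine_fun (affine_fun hull S)"
  by (rule hull_in) (unfold affine_fun_def, blast)

lemma affine_fun_imp_convex_fun: "affine_fun S \<Longrightarrow> convex_fun S"
  unfolding affine_fun_def convex_fun_def by blast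

lemma affine_funD:
  "affine_fun S \<Longrightarrow> x \<in> S \<Longrightarrow> y \<in> S \<Longrightarrow> u + v = 1 \<Longrightarrow> (\<lambda>J. u * x J + v * y J) \<in> S"
  unfolding affine_fun_def by blast

lemma affine_fun_add_diff:
  assumes S: "affine_fun S" and q: "q \<in> S" and p: "p \<in> S" and base: "base \<in> S"
  shows "(\<lambda>J. q J + t * (p J - base J)) \<in> S"
proof -
  have m1: "(\<lambda>J. t * p J + (1 - t) * base J) \<in> S"
    by (rule affine_funD[OF S p base]) simp
  have m2: "(\<lambda>J. 1/2 * q J + 1/2 * (t * p J + (1 - t) * base J)) \<in> S"
    by (rule affine_funD[OF S q m1]) simp
  have "(\<lambda>J. 2 * (1/2 * q J + 1/2 * (t * p J + (1 - t) * base J)) + (-1) * base J) \<in> S"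
    by (rule affine_funD[OF S m2 base]) simp
  moreover have "(\<lambda>J. 2 * (1/2 * q J + 1/2 * (t * p J + (1 - t) * base J)) + (-1) * base J) =
      (\<lambda>J. q J + t * (p J - base J))"
    by (rule ext) (simp add: algebra_simps)
  ultimately show ?thesis
    by simp
qed

text \<open>The points p K are used minimal K first: p K - base vanishes on the remaining K', none of
  which lies below K, so adding a multiple of it corrects the coordinate K alone.\<close>

lemma affine_fun_unitriangular_interpolation:
  fixes p :: "'a::order \<Rightarrow> 'a \<Rightarrow> real"
  assumes A: "affine_fun A" and "finite F" and base: "base \<in> A" "\<And>K. K \<in> F \<Longrightarrow> base K = 0"
    and p: "\<And>K. K \<in> F \<Longrightarrow> p K \<in> A" "\<And>K K'. K \<in> F \<Longrightarrow> K' \<in> F \<Longrightarrow> p K K' = of_bool (K' \<le> K)"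
  shows "\<exists>q\<in>A. \<forall>K\<in>F. q K = y K"
  using assms(2) base(2) p
proof (induction F rule: finite_psubset_induct)
  case (psubset F)
  show ?case
  proof (cases "F = {}")
    case True
    then show ?thesis
      using base(1) by blast
  next
    case False
    then obtain K where K: "K \<in> F" and K_min: "\<forall>K'\<in>F. K' \<le> K \<longrightarrow> K = K'"
      using finite_has_minimal[OF psubset.hyps(1)] by blast
    then have "F - {K} \<subset> F"
      by blast
    then have "\<exists>q\<in>A. \<forall>K'\<in>F - {K}. q K' = y K'"
      by (rule psubset.IH) (use psubset.prems in auto)
    then obtain q where q: "q \<in> A" "\<And>K'. K' \<in> F - {K} \<Longrightarrow> q K' = y K'"
      by blast
    let ?q = "\<lambda>J. q J + (y K - q K) * (p K J - base J)"
    have q_A: "?q \<in> A"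
      using affine_fun_add_diff[OF A q(1) psubset.prems(2)[OF K] base(1)] .
    have "?q K' = y K'" if K': "K' \<in> F" for K'
    proof (cases "K' = K")
      case True
      then show ?thesis
        using K psubset.prems(1,3) by simp
    next
      case False
      then have "p K K' = 0"
        using K K' K_min psubset.prems(3) by auto
      then show ?thesis
        using False K' q(2) psubset.prems(1) by simp
    qed
    then show ?thesis
      using q_A by (intro bexI[of _ ?q]) auto
  qed
qed

definition monomial_value :: "(nat set \<Rightarrow> real) \<Rightarrow> nat set \<Rightarrow> real" where
  "monomial_value w K = (if K = {} then 1 else w K)"

lemma linearize_superset:
  assumes "finite S" "Poly_Mapping.keys p \<subseteq> S"
  shows "linearize w p = (\<Sum>m\<in>S. Poly_Mapping.lookup p m * monomial_value w (Poly_Mapping.keys m))"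
proof -
  have "linearize w p =
      (\<Sum>m\<in>Poly_Mapping.keys p. Poly_Mapping.lookup p m * monomial_value w (Poly_Mapping.keys m))"
    by (simp add: linearize_def monomial_value_def)
  also have "\<dots> = (\<Sum>m\<in>S. Poly_Mapping.lookup p m * monomial_value w (Poly_Mapping.keys m))"
    by (rule sum.mono_neutral_left) (use assms in \<open>auto simp: in_keys_iff\<close>)
  finally show ?thesis .
qed

lemma linearize_zero [simp]: "linearize w 0 = 0"
  by (simp add: linearize_def)

lemma linearize_add: "linearize w (p + q) = linearize w p + linearize w q"
proof -
  let ?S = "Poly_Mapping.keys p \<union> Poly_Mapping.keys q"
  have "linearize w (p + q) =
      (\<Sum>m\<in>?S. Poly_Mapping.lookup (p + q) m * monomial_value w (Poly_Mapping.keys m))"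
    by (intro linearize_superset) (use keys_add[of p q] in auto)
  also have "\<dots> = linearize w p + linearize w q"
    by (simp add: linearize_superset[of ?S] lookup_add distrib_right sum.distrib)
  finally show ?thesis .
qed

lemma linearize_sum: "linearize w (sum f A) = (\<Sum>a\<in>A. linearize w (f a))"
  by (induction A rule: infinite_finite_induct) (simp_all add: linearize_add)

lemma linearize_single:
  "linearize w (Poly_Mapping.single m a) = a * monomial_value w (Poly_Mapping.keys m)"
  by (simp add: linearize_def monomial_value_def)

lemma linearize_affine:
  assumes "u + v = 1"
  shows "linearize (\<lambda>J. u * x J + v * y J) p = u * linearize x p + v * linearize y p"
proof -
  have "monomial_value (\<lambda>J. u * x J + v * y J) K = u * monomial_value x K + v * monomial_value y K"
    for K
    using assms by (simp add: monomial_value_def)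
  then show ?thesis
    by (simp add: linearize_superset[of "Poly_Mapping.keys p"] algebra_simps sum.distrib
        sum_distrib_left)
qed

lemma prod_single:
  "(\<Prod>x\<in>A. Poly_Mapping.single (f x) (a x)) = Poly_Mapping.single (\<Sum>x\<in>A. f x) (\<Prod>x\<in>A. a x)"
  by (induction A rule: infinite_finite_induct) (auto simp: mult_single)

lemma keys_add_nat:
  "Poly_Mapping.keys (p + (q :: 'a \<Rightarrow>\<^sub>0 nat)) = Poly_Mapping.keys p \<union> Poly_Mapping.keys q"
  by (auto simp: in_keys_iff lookup_add)

lemma keys_sum_nat:
  "finite A \<Longrightarrow> Poly_Mapping.keys (\<Sum>x\<in>A. f x :: 'a \<Rightarrow>\<^sub>0 nat) = (\<Union>x\<in>A. Poly_Mapping.keys (f x))"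
  by (induction A rule: finite_induct) (auto simp: keys_add_nat)

text \<open>Expanding the factor 1 - (sum of Var i over i in I - {c I}) means choosing either the
  constant (None) or one of the variables (Some i).\<close>

definition block_choices :: "(nat set \<Rightarrow> nat) \<Rightarrow> nat set \<Rightarrow> nat option set" where
  "block_choices c I = insert None (Some ` (I - {c I}))"

definition choice_monomial :: "nat option \<Rightarrow> (nat \<Rightarrow>\<^sub>0 nat)" where
  "choice_monomial ot = (case ot of None \<Rightarrow> 0 | Some i \<Rightarrow> Poly_Mapping.single i 1)"

definition choice_sign :: "nat option \<Rightarrow> real" where
  "choice_sign ot = (case ot of None \<Rightarrow> 1 | Some _ \<Rightarrow> -1)"

lemma sum_block_choices:
  "finite I \<Longrightarrow> (\<Sum>ot\<in>block_choices c I. g ot) = g None + (\<Sum>i\<in>I - {c I}. g (Some i))"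
  unfolding block_choices_def by (simp add: sum.reindex)

lemma keys_choice_monomial: "Poly_Mapping.keys (choice_monomial ot) = set_option ot"
  by (cases ot) (auto simp: choice_monomial_def)

lemma set_option_block_choice:
  "\<phi> \<in> PiE B (block_choices c) \<Longrightarrow> I \<in> B \<Longrightarrow> set_option (\<phi> I) \<subseteq> I - {c I}"
  by (auto simp: block_choices_def dest: PiE_mem)

lemma one_minus_sum_Var:
  "finite I \<Longrightarrow> 1 - (\<Sum>i\<in>I - {c I}. Var i) =
    (\<Sum>ot\<in>block_choices c I. Poly_Mapping.single (choice_monomial ot) (choice_sign ot))"
  by (simp add: sum_block_choices choice_monomial_def choice_sign_def Var_def single_uminus
      sum_negf)

lemma linearize_choice_expansion:
  assumes B: "finite B" "\<And>I. I \<in> B \<Longrightarrow> finite I" and R: "finite R"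
  shows "linearize w ((\<Prod>I\<in>B. 1 - (\<Sum>i\<in>I - {c I}. Var i)) * (\<Prod>i\<in>R. Var i)) =
    (\<Sum>\<phi>\<in>PiE B (block_choices c). (\<Prod>I\<in>B. choice_sign (\<phi> I)) *
       monomial_value w ((\<Union>I\<in>B. set_option (\<phi> I)) \<union> R))"
proof -
  have "(\<Prod>I\<in>B. 1 - (\<Sum>i\<in>I - {c I}. Var i)) =
      (\<Prod>I\<in>B. \<Sum>ot\<in>block_choices c I. Poly_Mapping.single (choice_monomial ot) (choice_sign ot))"
    using B(2) by (simp add: one_minus_sum_Var)
  also have "\<dots> = (\<Sum>\<phi>\<in>PiE B (block_choices c).
      Poly_Mapping.single (\<Sum>I\<in>B. choice_monomial (\<phi> I)) (\<Prod>I\<in>B. choice_sign (\<phi> I)))"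
    using B by (subst prod_sum_PiE) (auto simp: block_choices_def prod_single)
  finally have factors: "(\<Prod>I\<in>B. 1 - (\<Sum>i\<in>I - {c I}. Var i)) = \<dots>" .
  have variables: "(\<Prod>i\<in>R. Var i) = Poly_Mapping.single (\<Sum>i\<in>R. Poly_Mapping.single i 1) 1"
    by (simp add: Var_def prod_single)
  have keys: "Poly_Mapping.keys ((\<Sum>I\<in>B. choice_monomial (\<phi> I)) + (\<Sum>i\<in>R. Poly_Mapping.single i 1)) =
      (\<Union>I\<in>B. set_option (\<phi> I)) \<union> R" for \<phi>
    using B R by (simp add: keys_add_nat keys_sum_nat keys_choice_monomial)
  have expand: "(\<Prod>I\<in>B. 1 - (\<Sum>i\<in>I - {c I}. Var i)) * (\<Prod>i\<in>R. Var i) =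
      (\<Sum>\<phi>\<in>PiE B (block_choices c). Poly_Mapping.single
        ((\<Sum>I\<in>B. choice_monomial (\<phi> I)) + (\<Sum>i\<in>R. Poly_Mapping.single i 1))
        (\<Prod>I\<in>B. choice_sign (\<phi> I)))"
    unfolding factors variables sum_distrib_right by (simp add: mult_single)
  show ?thesis
    by (simp only: expand linearize_sum linearize_single keys)
qed

locale partitioned_hypergraph =
  fixes n :: nat and V :: "nat set set" and E :: "nat set set set" and c :: "nat set \<Rightarrow> nat"
  assumes partition: "\<Union>V = {1..n}"
    and disjoint_blocks: "disjoint V"
    and edges: "\<And>e. e \<in> E \<Longrightarrow> e \<subseteq> V \<and> e \<noteq> {}"
    and down: "downward_closed E"
    and choice: "\<And>I. I \<in> V \<Longrightarrow> c I \<in> I"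
begin

lemma finite_blocks: "finite V"
  using partition by (metis finite_UnionD finite_atLeastAtMost)

lemma finite_block: "I \<in> V \<Longrightarrow> finite I"
  using partition by (metis Union_upper finite_atLeastAtMost finite_subset)

lemma block_eqI: "I \<in> V \<Longrightarrow> I' \<in> V \<Longrightarrow> x \<in> I \<Longrightarrow> x \<in> I' \<Longrightarrow> I = I'"
  using disjoint_blocks by (auto simp: pairwise_def disjnt_def)

lemma choice_mem_block_iff: "I \<in> V \<Longrightarrow> I' \<in> V \<Longrightarrow> c I' \<in> I \<longleftrightarrow> I' = I"
  using block_eqI choice by blast

definition blocks_of :: "nat set \<Rightarrow> nat set set" where
  "blocks_of J = {I\<in>V. J \<inter> I \<noteq> {}}"

definition partial_transversal :: "nat set \<Rightarrow> bool" where
  "partial_transversal J \<longleftrightarrow> J \<subseteq> \<Union>V \<and> (\<forall>I\<in>V. card (J \<inter> I) \<le> 1)"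

definition transversal :: "nat set \<Rightarrow> bool" where
  "transversal X \<longleftrightarrow> X \<subseteq> \<Union>V \<and> (\<forall>I\<in>V. card (X \<inter> I) = 1)"

lemma partial_transversal_eq:
  assumes "partial_transversal J" "I \<in> V" "x \<in> J \<inter> I" "y \<in> J \<inter> I"
  shows "x = y"
proof -
  have "card (J \<inter> I) \<le> Suc 0"
    using assms(1,2) by (simp add: partial_transversal_def)
  then show ?thesis
    using assms(2-4) finite_block card_le_Suc0_iff_eq[of "J \<inter> I"] by blast
qed

lemma card_block_eq_1:
  assumes "partial_transversal J" "I \<in> V" "J \<inter> I \<noteq> {}"
  shows "card (J \<inter> I) = 1"
proof -
  have "card (J \<inter> I) > 0"
    using assms(2,3) finite_block by (simp add: card_gt_0_iff)
  moreover have "card (J \<inter> I) \<le> 1"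
    using assms(1,2) by (simp add: partial_transversal_def)
  ultimately show ?thesis
    by linarith
qed

lemma Jsets_iff:
  assumes "e \<subseteq> V"
  shows "J \<in> Jsets e \<longleftrightarrow> partial_transversal J \<and> blocks_of J = e"
proof
  assume "J \<in> Jsets e"
  then have sub: "J \<subseteq> \<Union>e" and one: "\<And>I. I \<in> e \<Longrightarrow> card (J \<inter> I) = 1"
    by (auto simp: Jsets_def)
  have blocks: "blocks_of J = e"
  proof
    show "e \<subseteq> blocks_of J"
      using assms one by (fastforce simp: blocks_of_def)
    show "blocks_of J \<subseteq> e"
      using assms sub block_eqI by (fastforce simp: blocks_of_def)
  qed
  have "card (J \<inter> I) \<le> 1" if "I \<in> V" for I
    using one[of I] blocks that by (cases "I \<in> e") (auto simp: blocks_of_def)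
  moreover have "J \<subseteq> \<Union>V"
    using sub assms by blast
  ultimately show "partial_transversal J \<and> blocks_of J = e"
    using blocks by (simp add: partial_transversal_def)
next
  assume "partial_transversal J \<and> blocks_of J = e"
  then have pt: "partial_transversal J" and e: "e = blocks_of J"
    by auto
  have "J \<subseteq> \<Union>e"
  proof
    fix x
    assume "x \<in> J"
    moreover obtain I where "I \<in> V" "x \<in> I"
      using pt \<open>x \<in> J\<close> by (auto simp: partial_transversal_def)
    ultimately show "x \<in> \<Union>e"
      by (auto simp: e blocks_of_def)
  qed
  moreover have "card (J \<inter> I) = 1" if "I \<in> e" for I
    using that pt card_block_eq_1 by (auto simp: e blocks_of_def)
  ultimately show "J \<in> Jsets e"
    by (auto simp: Jsets_def)
qed

lemma mem_JH_iff: "J \<in> JH V E \<longleftrightarrow> partial_transversal J \<and> blocks_of J \<in> LV V \<union> E"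
proof -
  have sub: "e \<subseteq> V" if "e \<in> LV V \<union> E" for e
    using that edges by (auto simp: LV_def)
  show ?thesis
  proof
    assume "J \<in> JH V E"
    then obtain e where "e \<in> LV V \<union> E" "J \<in> Jsets e"
      by (auto simp: JH_def)
    then show "partial_transversal J \<and> blocks_of J \<in> LV V \<union> E"
      using Jsets_iff[OF sub] by auto
  next
    assume "partial_transversal J \<and> blocks_of J \<in> LV V \<union> E"
    then show "J \<in> JH V E"
      using Jsets_iff[OF sub, of "blocks_of J" J] unfolding JH_def by auto
  qed
qed

lemma JH_nonempty: "J \<in> JH V E \<Longrightarrow> J \<noteq> {}"
  using edges by (auto simp: mem_JH_iff blocks_of_def LV_def)

lemma JH_subset: "J \<in> JH V E \<Longrightarrow> J \<subseteq> {1..n}"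
  using partition by (auto simp: mem_JH_iff partial_transversal_def)

lemma JH_finite: "J \<in> JH V E \<Longrightarrow> finite J"
  using JH_subset finite_subset by blast

lemma singleton_in_JH:
  assumes "i \<in> \<Union>V"
  shows "{i} \<in> JH V E"
proof -
  obtain I where I: "I \<in> V" "i \<in> I"
    using assms by blast
  then have "blocks_of {i} = {I}"
    using block_eqI by (auto simp: blocks_of_def)
  moreover have "partial_transversal {i}"
    using I by (auto simp: partial_transversal_def Int_insert_left)
  ultimately show ?thesis
    using I by (auto simp: mem_JH_iff LV_def)
qed

lemma partial_transversal_in_JH:
  assumes J: "J \<in> JH V E" and K: "partial_transversal K" "K \<noteq> {}" "blocks_of K \<subseteq> blocks_of J"
  shows "K \<in> JH V E"
proof -
  have finite: "finite (blocks_of L)" for L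
    using finite_blocks by (simp add: blocks_of_def)
  have "blocks_of K \<noteq> {}"
    using K(1,2) by (auto simp: partial_transversal_def blocks_of_def)
  then have "card (blocks_of K) > 0"
    using finite by (simp add: card_gt_0_iff)
  then consider "card (blocks_of K) = 1" | "card (blocks_of K) > 1"
    by linarith
  then have "blocks_of K \<in> LV V \<union> E"
  proof cases
    case 1
    then obtain I where I: "blocks_of K = {I}"
      by (auto simp: card_1_singleton_iff)
    then have "I \<in> V"
      by (auto simp: blocks_of_def)
    then show ?thesis
      using I by (auto simp: LV_def)
  next
    case 2
    then have "card (blocks_of J) > 1"
      using card_mono[OF finite K(3)] by linarith
    then have "blocks_of J \<notin> LV V"
      by (auto simp: LV_def)
    then have "blocks_of J \<in> E"
      using J by (simp add: mem_JH_iff)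
    then show ?thesis
      using down K(3) 2 unfolding downward_closed_def by blast
  qed
  then show ?thesis
    using K(1) by (simp add: mem_JH_iff)
qed

definition free_sets :: "nat set set" where
  "free_sets = JH_le n V E (c ` V)"

lemma mem_free_sets_iff: "K \<in> free_sets \<longleftrightarrow> K \<in> JH V E \<and> K \<inter> c ` V = {}"
  using JH_subset by (auto simp: free_sets_def JH_le_def)

lemma finite_free_sets: "finite free_sets"
proof -
  have "free_sets \<subseteq> Pow {1..n}"
    using JH_subset by (auto simp: free_sets_def JH_le_def)
  then show ?thesis
    by (rule finite_subset) simp
qed

definition substituted_poly :: "nat set \<Rightarrow> rpoly" where
  "substituted_poly J =
    (\<Prod>I\<in>{I\<in>V. c I \<in> J}. 1 - (\<Sum>i\<in>I - {c I}. Var i)) * (\<Prod>i\<in>J - c ` V. Var i)"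

definition choice_support :: "nat set \<Rightarrow> (nat set \<Rightarrow> nat option) \<Rightarrow> nat set" where
  "choice_support J \<phi> = (\<Union>I\<in>{I\<in>V. c I \<in> J}. set_option (\<phi> I)) \<union> (J - c ` V)"

lemma linearize_substituted_poly:
  assumes "J \<in> JH V E"
  shows "linearize w (substituted_poly J) =
    (\<Sum>\<phi>\<in>PiE {I\<in>V. c I \<in> J} (block_choices c).
       (\<Prod>I\<in>{I\<in>V. c I \<in> J}. choice_sign (\<phi> I)) * monomial_value w (choice_support J \<phi>))"
  unfolding substituted_poly_def choice_support_def
  using finite_blocks finite_block JH_finite[OF assms] by (intro linearize_choice_expansion) auto

lemma choice_support_Int_block:
  assumes J: "J \<in> JH V E" and \<phi>: "\<phi> \<in> PiE {I\<in>V. c I \<in> J} (block_choices c)" and I: "I \<in> V"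
  shows "choice_support J \<phi> \<inter> I \<subseteq> (if c I \<in> J then set_option (\<phi> I) else J \<inter> I)"
proof
  fix x
  assume x: "x \<in> choice_support J \<phi> \<inter> I"
  show "x \<in> (if c I \<in> J then set_option (\<phi> I) else J \<inter> I)"
  proof (cases "x \<in> J - c ` V")
    case True
    have J_pt: "partial_transversal J"
      using J by (simp add: mem_JH_iff)
    have "c I \<notin> J"
    proof
      assume "c I \<in> J"
      then have "x = c I"
        using partial_transversal_eq[OF J_pt I] True x choice[OF I] by blast
      then show False
        using True I by blast
    qed
    then show ?thesis
      using True x by simp
  next
    case False
    then obtain I' where I': "I' \<in> V" "c I' \<in> J" "x \<in> set_option (\<phi> I')"
      using x by (auto simp: choice_support_def)
    then have "I' = I"
      using set_option_block_choice[OF \<phi>] block_eqI[OF I'(1) I, of x] x by blast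
    then show ?thesis
      using I' by simp
  qed
qed

lemma choice_support_free:
  assumes J: "J \<in> JH V E" and \<phi>: "\<phi> \<in> PiE {I\<in>V. c I \<in> J} (block_choices c)"
  shows "choice_support J \<phi> = {} \<or> choice_support J \<phi> \<in> free_sets"
proof -
  let ?K = "choice_support J \<phi>"
  note block = choice_support_Int_block[OF J \<phi>]
  have J_pt: "partial_transversal J"
    using J by (simp add: mem_JH_iff)
  have "c I \<notin> ?K" if I: "I \<in> V" for I
  proof
    assume "c I \<in> ?K"
    then have "c I \<in> (if c I \<in> J then set_option (\<phi> I) else J \<inter> I)"
      using block[OF I] choice[OF I] by blast
    then show False
      using set_option_block_choice[OF \<phi>, of I] I by (auto split: if_splits)
  qed
  then have K_free: "?K \<inter> c ` V = {}"
    by blast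
  have "?K \<subseteq> \<Union>V"
    using set_option_block_choice[OF \<phi>] J_pt
    by (fastforce simp: choice_support_def partial_transversal_def)
  moreover have "card (?K \<inter> I) \<le> 1" if I: "I \<in> V" for I
  proof -
    have "card (set_option (\<phi> I)) \<le> 1"
      by (cases "\<phi> I") auto
    moreover have "card (J \<inter> I) \<le> 1"
      using J_pt I by (simp add: partial_transversal_def)
    moreover have "finite (if c I \<in> J then set_option (\<phi> I) else J \<inter> I)"
      using finite_block[OF I] by simp
    ultimately show ?thesis
      using card_mono[OF _ block[OF I]] by (simp split: if_splits)
  qed
  ultimately have "partial_transversal ?K"
    by (simp add: partial_transversal_def)
  moreover have "blocks_of ?K \<subseteq> blocks_of J"
    using block choice by (fastforce simp: blocks_of_def split: if_splits)
  ultimately show ?thesis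
    using partial_transversal_in_JH[OF J] K_free by (auto simp: mem_free_sets_iff)
qed

definition constraint_set :: "(nat set \<Rightarrow> real) set" where
  "constraint_set = {w. (\<forall>J. J \<notin> JH V E \<longrightarrow> w J = 0) \<and>
     (\<forall>J\<in>JH V E - free_sets. w J = linearize w (substituted_poly J))}"

lemma affine_constraint_set: "affine_fun constraint_set"
  unfolding affine_fun_def constraint_set_def by (auto simp: linearize_affine)

lemma constraint_set_eqI:
  assumes w1: "w1 \<in> constraint_set" and w2: "w2 \<in> constraint_set"
    and free: "\<And>K. K \<in> free_sets \<Longrightarrow> w1 K = w2 K"
  shows "w1 = w2"
proof
  fix J
  consider "J \<notin> JH V E" | "J \<in> free_sets" | "J \<in> JH V E - free_sets"
    by blast
  then show "w1 J = w2 J"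
  proof cases
    case 1
    then show ?thesis
      using w1 w2 by (simp add: constraint_set_def)
  next
    case 2
    then show ?thesis
      by (rule free)
  next
    case 3
    then have J: "J \<in> JH V E"
      by simp
    have "monomial_value w1 (choice_support J \<phi>) = monomial_value w2 (choice_support J \<phi>)"
      if "\<phi> \<in> PiE {I\<in>V. c I \<in> J} (block_choices c)" for \<phi>
      using choice_support_free[OF J that] free by (auto simp: monomial_value_def)
    then have "linearize w1 (substituted_poly J) = linearize w2 (substituted_poly J)"
      unfolding linearize_substituted_poly[OF J] by (intro sum.cong) auto
    then show ?thesis
      using w1 w2 3 by (simp add: constraint_set_def)
  qed
qed

definition binary_point :: "nat set \<Rightarrow> nat set \<Rightarrow> real" where
  "binary_point X J = (if J \<in> JH V E then of_bool (J \<subseteq> X) else 0)"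

lemma binary_point_singleton: "i \<in> \<Union>V \<Longrightarrow> binary_point X {i} = of_bool (i \<in> X)"
  by (simp add: binary_point_def singleton_in_JH)

lemma prod_binary_point_singletons:
  assumes J: "J \<in> JH V E"
  shows "(\<Prod>i\<in>J. binary_point X {i}) = binary_point X J"
proof -
  have "(\<Prod>i\<in>J. binary_point X {i}) = (\<Prod>i\<in>J. of_bool (i \<in> X))"
    using JH_subset[OF J] partition by (intro prod.cong) (auto simp: binary_point_singleton)
  also have "\<dots> = binary_point X J"
    using J JH_finite[OF J] by (simp add: binary_point_def prod_of_bool subset_eq)
  finally show ?thesis .
qed

lemma sum_binary_point_block:
  assumes I: "I \<in> V"
  shows "(\<Sum>i\<in>I. binary_point X {i}) = real (card (X \<inter> I))"
proof -
  have "(\<Sum>i\<in>I. binary_point X {i}) = (\<Sum>i\<in>I. of_bool (i \<in> X))"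
    using I by (intro sum.cong refl binary_point_singleton) blast
  also have "\<dots> = real (card (X \<inter> I))"
    using finite_block[OF I] by (simp add: Int_commute)
  finally show ?thesis .
qed

lemma SH_prod_singletons:
  assumes w: "w \<in> SH V E" and J: "J \<in> JH V E"
  shows "w J = (\<Prod>i\<in>J. w {i})"
proof (cases "card J > 1")
  case True
  then show ?thesis
    using w J by (simp add: SH_def)
next
  case False
  moreover have "card J > 0"
    using JH_finite[OF J] JH_nonempty[OF J] by (simp add: card_gt_0_iff)
  ultimately have "card J = 1"
    by linarith
  then obtain i where "J = {i}"
    by (auto simp: card_1_singleton_iff)
  then show ?thesis
    by simp
qed

lemma SH_obtain_transversal:
  assumes w: "w \<in> SH V E"
  obtains X where "transversal X" "w = binary_point X"
proof -
  define X where "X = {i \<in> \<Union>V. w {i} = 1}"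
  have w_singleton: "w {i} = binary_point X {i}" if "i \<in> \<Union>V" for i
    using w singleton_in_JH[OF that] that by (auto simp: SH_def X_def binary_point_singleton)
  have w_eq: "w = binary_point X"
  proof
    fix J
    show "w J = binary_point X J"
    proof (cases "J \<in> JH V E")
      case True
      have "J \<subseteq> \<Union>V"
        using JH_subset[OF True] partition by simp
      then have "(\<Prod>i\<in>J. w {i}) = (\<Prod>i\<in>J. binary_point X {i})"
        using w_singleton by (intro prod.cong) auto
      then show ?thesis
        using SH_prod_singletons[OF w True] prod_binary_point_singletons[OF True] by simp
    next
      case False
      then show ?thesis
        using w by (simp add: SH_def binary_point_def)
    qed
  qed
  have "real (card (X \<inter> I)) = 1" if "I \<in> V" for I
    using w that by (simp add: SH_def w_eq flip: sum_binary_point_block)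
  then have "transversal X"
    by (auto simp: transversal_def X_def)
  with w_eq show ?thesis
    using that by blast
qed

lemma binary_point_in_SH:
  assumes X: "transversal X"
  shows "binary_point X \<in> SH V E"
  unfolding SH_def
proof (intro CollectI conjI ballI allI impI)
  show "binary_point X J = 0" if "J \<notin> JH V E" for J
    using that by (simp add: binary_point_def)
  show "binary_point X J \<in> {0, 1}" for J
    by (simp add: binary_point_def)
  show "(\<Sum>i\<in>I. binary_point X {i}) = 1" if "I \<in> V" for I
    using X that by (simp add: sum_binary_point_block transversal_def)
  show "binary_point X J = (\<Prod>i\<in>J. binary_point X {i})" if "J \<in> JH V E" for J
    using prod_binary_point_singletons[OF that] by simp
qed

lemma SH_eq_binary_points: "SH V E = binary_point ` Collect transversal"
proof (intro equalityI subsetI)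
  fix w
  assume "w \<in> SH V E"
  then obtain X where "transversal X" "w = binary_point X"
    by (rule SH_obtain_transversal)
  then show "w \<in> binary_point ` Collect transversal"
    by blast
qed (auto intro: binary_point_in_SH)

text \<open>Exactly one of the summands, the constant or -w(i) for the selected i, survives.\<close>

lemma sum_block_choices_transversal:
  assumes X: "transversal X" and I: "I \<in> V"
  shows "(\<Sum>ot\<in>block_choices c I. choice_sign ot * of_bool (set_option ot \<subseteq> X)) =
    of_bool (c I \<in> X)"
proof -
  obtain x where x: "X \<inter> I = {x}"
    using X I by (auto simp: transversal_def card_1_singleton_iff)
  have "(I - {c I}) \<inter> X = {x} - {c I}"
    using x by blast
  then have "(\<Sum>i\<in>I - {c I}. of_bool (i \<in> X)) = (of_bool (x \<noteq> c I) :: real)"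
    using finite_block[OF I] by simp
  moreover have "c I \<in> X \<longleftrightarrow> c I \<in> X \<inter> I"
    using choice[OF I] by blast
  then have "c I \<in> X \<longleftrightarrow> x = c I"
    using x by auto
  ultimately show ?thesis
    using finite_block[OF I] by (simp add: sum_block_choices choice_sign_def sum_negf)
qed

lemma linearize_binary_point:
  assumes X: "transversal X" and J: "J \<in> JH V E"
  shows "linearize (binary_point X) (substituted_poly J) = binary_point X J"
proof -
  let ?B = "{I\<in>V. c I \<in> J}"
  have support_value: "monomial_value (binary_point X) (choice_support J \<phi>) =
      (\<Prod>I\<in>?B. of_bool (set_option (\<phi> I) \<subseteq> X)) * of_bool (J - c ` V \<subseteq> X)"
    if "\<phi> \<in> PiE ?B (block_choices c)" for \<phi>
  proof -
    have "monomial_value (binary_point X) (choice_support J \<phi>) = of_bool (choice_support J \<phi> \<subseteq> X)"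
      using choice_support_free[OF J that]
      by (auto simp: monomial_value_def binary_point_def mem_free_sets_iff)
    then show ?thesis
      using finite_blocks by (simp add: choice_support_def prod_of_bool) blast
  qed
  have "linearize (binary_point X) (substituted_poly J) =
      (\<Sum>\<phi>\<in>PiE ?B (block_choices c).
        \<Prod>I\<in>?B. choice_sign (\<phi> I) * of_bool (set_option (\<phi> I) \<subseteq> X)) * of_bool (J - c ` V \<subseteq> X)"
    unfolding linearize_substituted_poly[OF J] sum_distrib_right
    by (intro sum.cong) (simp_all add: support_value prod.distrib mult.assoc)
  also have "\<dots> = (\<Prod>I\<in>?B. \<Sum>ot\<in>block_choices c I.
      choice_sign ot * of_bool (set_option ot \<subseteq> X)) * of_bool (J - c ` V \<subseteq> X)"
    using finite_blocks finite_block by (subst prod_sum_PiE) (auto simp: block_choices_def)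
  also have "\<dots> = (\<Prod>I\<in>?B. of_bool (c I \<in> X)) * of_bool (J - c ` V \<subseteq> X)"
    using sum_block_choices_transversal[OF X] by simp
  also have "\<dots> = of_bool (J \<subseteq> X)"
    using finite_blocks by (auto simp: prod_of_bool)
  finally show ?thesis
    using J by (simp add: binary_point_def)
qed

lemma SH_subset_constraint_set: "SH V E \<subseteq> constraint_set"
  using linearize_binary_point
  by (auto simp: SH_eq_binary_points constraint_set_def binary_point_def)

lemma affine_hull_MC_subset: "affine_fun hull MC V E \<subseteq> constraint_set"
proof -
  have "MC V E \<subseteq> constraint_set"
    unfolding MC_def
    using SH_subset_constraint_set affine_fun_imp_convex_fun[OF affine_constraint_set]
    by (rule hull_minimal)
  then show ?thesis
    using affine_constraint_set by (rule hull_minimal)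
qed

definition completion :: "nat set \<Rightarrow> nat set" where
  "completion K = K \<union> c ` {I\<in>V. K \<inter> I = {}}"

lemma transversal_completion:
  assumes K: "partial_transversal K"
  shows "transversal (completion K)"
proof -
  have "completion K \<inter> I = (if K \<inter> I = {} then {c I} else K \<inter> I)" if I: "I \<in> V" for I
    using I by (auto simp: completion_def choice_mem_block_iff)
  then have "card (completion K \<inter> I) = 1" if "I \<in> V" for I
    using that card_block_eq_1[OF K] by simp
  moreover have "completion K \<subseteq> \<Union>V"
    using K choice by (auto simp: completion_def partial_transversal_def)
  ultimately show ?thesis
    by (simp add: transversal_def)
qed

lemma binary_point_completion:
  assumes "K' \<in> free_sets"
  shows "binary_point (completion K) K' = of_bool (K' \<subseteq> K)"
proof -
  have "K' \<subseteq> completion K \<longleftrightarrow> K' \<subseteq> K"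
    using assms unfolding mem_free_sets_iff completion_def by blast
  then show ?thesis
    using assms by (simp add: mem_free_sets_iff binary_point_def)
qed

theorem affine_hull_MC_eq: "affine_fun hull MC V E = constraint_set"
proof
  show "affine_fun hull MC V E \<subseteq> constraint_set"
    by (rule affine_hull_MC_subset)
  show "constraint_set \<subseteq> affine_fun hull MC V E"
  proof
    fix w
    assume w: "w \<in> constraint_set"
    let ?A = "affine_fun hull MC V E"
    define p where "p K = binary_point (completion K)" for K
    have p_A: "p K \<in> ?A" if "partial_transversal K" for K
    proof -
      have "p K \<in> SH V E"
        using transversal_completion[OF that] by (simp add: SH_eq_binary_points p_def)
      then show ?thesis
        unfolding MC_def by (meson hull_subset subsetD)
    qed
    have "\<exists>q\<in>?A. \<forall>K\<in>free_sets. q K = w K"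
    proof (rule affine_fun_unitriangular_interpolation[where base = "p {}" and p = p])
      show "p {} \<in> ?A"
        by (rule p_A) (simp add: partial_transversal_def)
      show "p K \<in> ?A" if "K \<in> free_sets" for K
        using that p_A by (simp add: mem_free_sets_iff mem_JH_iff)
      show "p {} K = 0" if "K \<in> free_sets" for K
        using that JH_nonempty by (simp add: p_def binary_point_completion mem_free_sets_iff)
      show "p K K' = of_bool (K' \<le> K)" if "K' \<in> free_sets" for K K'
        using that unfolding p_def by (rule binary_point_completion)
    qed (simp_all add: affine_fun_hull finite_free_sets)
    then obtain q where q: "q \<in> ?A" "\<And>K. K \<in> free_sets \<Longrightarrow> q K = w K"
      by blast
    have "q = w"
      using affine_hull_MC_subset q by (intro constraint_set_eqI[OF _ w]) auto
    then show "w \<in> ?A"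
      using q(1) by simp
  qed
qed

end

theorem theorem3p6:
  fixes n :: nat and V :: "nat set set" and E :: "nat set set set" and c :: "nat set \<Rightarrow> nat"
  assumes partition: "\<Union>V = {1..n}"
    and disj: "\<forall>I\<in>V. \<forall>I'\<in>V. I \<noteq> I' \<longrightarrow> I \<inter> I' = {}"
    and card_blocks: "\<forall>I\<in>V. finite I \<and> card I \<ge> 2"
    and edges: "\<forall>e\<in>E. e \<subseteq> V \<and> finite e \<and> card e \<ge> 2"
    and down: "downward_closed E"
    and choice: "\<forall>I\<in>V. c I \<in> I"
  shows "affine_fun hull (MC V E) =
    {w. (\<forall>J. J \<notin> JH V E \<longrightarrow> w J = 0) \<and>
        (\<forall>J\<in>JH V E - JH_le n V E (c ` V).
           w J = linearize w
             ((\<Prod>I\<in>{I\<in>V. c I \<in> J}. 1 - (\<Sum>i\<in>I - {c I}. Var i)) *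
              (\<Prod>i\<in>J - c ` V. Var i)))}"
proof -
  interpret partitioned_hypergraph n V E c
    using partition disj edges down choice
    by unfold_locales (auto simp: pairwise_def disjnt_def)
  show ?thesis
    using affine_hull_MC_eq unfolding constraint_set_def free_sets_def substituted_poly_def .
qed

end
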